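(* In the setting of the adaptive mirror triangle method for the minimax problem (see context), for every step $k\ge0$ performed by the method and every $x\in Q$, $$A_{k+1}f(x_{k+1})-A_kf(x_k)+V(x,u_{k+1})-V(x,u_k)\le\alpha_{k+1}f(x),$$ where $\alpha_{k+1},A_{k+1},u_{k+1},x_{k+1}$ are the values accepted at step $k+1$.
   Context: $\mathbb{R}^n$ carries a norm $\|\cdot\|$ with dual norm $\|\lambda\|_*=\max_{\|\nu\|\le1}\langle\lambda,\nu\rangle$; $Q\subseteq\mathbb{R}^n$ closed convex; $f_1,\dots,f_M$ convex on $Q$, differentiable, with $\|\nabla f_i(x)-\nabla f_i(y)\|_*\le L\|x-y\|$; $h$ convex on $Q$; $f(x)=\max_i f_i(x)+h(x)$. A prox-function is a continuously differentiable $d:Q\to\mathbb{R}$, $1$-strongly convex w.r.t. $\|\cdot\|$; $V(x,y)=d(x)-d(y)-\langle\nabla d(y),x-y\rangle$. Method (with $x_0\in Q$, $0<L_0\le L$): $y_0=u_0=x_0$, $L_1=L_0/2$, $\alpha_0=A_0=0$. Step $k+1$ with current $L_{k+1}$: (i) $\alpha_{k+1}$ is the largest root of $A_k+\alpha=L_{k+1}\alpha^2$, $A_{k+1}=A_k+\alpha_{k+1}$; (ii) $y_{k+1}=(\alpha_{k+1}u_k+A_kx_k)/A_{k+1}$; (iii) $u_{k+1}=\arg\min_{x\in Q}\{V(x,u_k)+\alpha_{k+1}(\max_j[f_j(y_{k+1})+\langle\nabla f_j(y_{k+1}),x-y_{k+1}\rangle]+h(x))\}$; (iv) $x_{k+1}=(\alpha_{k+1}u_{k+1}+A_kx_k)/A_{k+1}$;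 (v) if $f(x_{k+1})\le\max_j\{f_j(y_{k+1})+\langle\nabla f_j(y_{k+1}),x_{k+1}-y_{k+1}\rangle\}+\frac{L_{k+1}}{2}\|x_{k+1}-y_{k+1}\|^2+h(x_{k+1})$, set $L_{k+2}=L_{k+1}/2$ and go to the next step; otherwise replace $L_{k+1}$ by $2L_{k+1}$ and repeat step $k+1$ from (i). *)

theory Defs
  imports "HOL-Analysis.Analysis"
begin

definition is_norm :: "('a::euclidean_space \<Rightarrow> real) \<Rightarrow> bool" where
  "is_norm N \<longleftrightarrow> (\<forall>x. 0 \<le> N x) \<and> (\<forall>x. N x = 0 \<longleftrightarrow> x = 0)
     \<and> (\<forall>c x. N (c *\<^sub>R x) = \<bar>c\<bar> * N x) \<and> (\<forall>x y. N (x + y) \<le> N x + N y)"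

definition dual_norm :: "('a::euclidean_space \<Rightarrow> real) \<Rightarrow> 'a \<Rightarrow> real" where
  "dual_norm N l = (SUP v\<in>{v. N v \<le> 1}. l \<bullet> v)"

definition strongly_convex_wrt :: "('a::euclidean_space \<Rightarrow> real) \<Rightarrow> real \<Rightarrow> 'a set \<Rightarrow> ('a \<Rightarrow> real) \<Rightarrow> bool" where
  "strongly_convex_wrt N \<sigma> Q d \<longleftrightarrow>
     (\<forall>x\<in>Q. \<forall>y\<in>Q. \<forall>t::real. 0 \<le> t \<and> t \<le> 1 \<longrightarrow>
        d ((1 - t) *\<^sub>R x + t *\<^sub>R y) \<le> (1 - t) * d x + t * d y - \<sigma> / 2 * t * (1 - t) * (N (x - y))\<^sup>2)"

definition Vb :: "('a::euclidean_space \<Rightarrow> real) \<Rightarrow> ('a \<Rightarrow> 'a) \<Rightarrow> 'a \<Rightarrow> 'a \<Rightarrow> real" where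
  "Vb d Dd x y = d x - d y - Dd y \<bullet> (x - y)"

definition fobj :: "nat \<Rightarrow> (nat \<Rightarrow> 'a::euclidean_space \<Rightarrow> real) \<Rightarrow> ('a \<Rightarrow> real) \<Rightarrow> 'a \<Rightarrow> real" where
  "fobj M F h x = Max ((\<lambda>j. F j x) ` {..<M}) + h x"

definition lin_max :: "nat \<Rightarrow> (nat \<Rightarrow> 'a::euclidean_space \<Rightarrow> real) \<Rightarrow> (nat \<Rightarrow> 'a \<Rightarrow> 'a) \<Rightarrow> 'a \<Rightarrow> 'a \<Rightarrow> real" where
  "lin_max M F G y x = Max ((\<lambda>j. F j y + G j y \<bullet> (x - y)) ` {..<M})"

text \<open>Items (i)-(iv) of one step, performed with trial constant Lt from the
  state (Ak, xk, uk), producing (alpha, A', y, u, x).\<close>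
definition mt_step ::
  "'a set \<Rightarrow> nat \<Rightarrow> (nat \<Rightarrow> 'a::euclidean_space \<Rightarrow> real) \<Rightarrow> (nat \<Rightarrow> 'a \<Rightarrow> 'a) \<Rightarrow> ('a \<Rightarrow> real)
   \<Rightarrow> ('a \<Rightarrow> real) \<Rightarrow> ('a \<Rightarrow> 'a) \<Rightarrow> real \<Rightarrow> real \<Rightarrow> 'a \<Rightarrow> 'a
   \<Rightarrow> real \<Rightarrow> real \<Rightarrow> 'a \<Rightarrow> 'a \<Rightarrow> 'a \<Rightarrow> bool" where
  "mt_step Q M F G h d Dd Lt Ak xk uk a A' y u x \<longleftrightarrow>
     Lt * a\<^sup>2 = Ak + a \<and> (\<forall>b. Lt * b\<^sup>2 = Ak + b \<longrightarrow> b \<le> a) \<and>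
     A' = Ak + a \<and>
     y = (1 / A') *\<^sub>R (a *\<^sub>R uk + Ak *\<^sub>R xk) \<and>
     u \<in> Q \<and>
     (\<forall>z\<in>Q. Vb d Dd u uk + a * (lin_max M F G y u + h u)
              \<le> Vb d Dd z uk + a * (lin_max M F G y z + h z)) \<and>
     x = (1 / A') *\<^sub>R (a *\<^sub>R u + Ak *\<^sub>R xk)"

definition mt_accept ::
  "('a::euclidean_space \<Rightarrow> real) \<Rightarrow> nat \<Rightarrow> (nat \<Rightarrow> 'a \<Rightarrow> real) \<Rightarrow> (nat \<Rightarrow> 'a \<Rightarrow> 'a) \<Rightarrow> ('a \<Rightarrow> real)
   \<Rightarrow> real \<Rightarrow> 'a \<Rightarrow> 'a \<Rightarrow> bool" where
  "mt_accept N M F G h Lt y x \<longleftrightarrow>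
     fobj M F h x \<le> lin_max M F G y x + Lt / 2 * (N (x - y))\<^sup>2 + h x"

text \<open>Lacc (k+1) is the value of L_{k+1} accepted at step k+1; Lacc 0 = L0 is a
  convention so that the starting trial value of step k+1 is Lacc k / 2
  (i.e. L_1 = L0/2 and L_{k+2} = L_{k+1}/2).\<close>
definition mt_run ::
  "('a::euclidean_space \<Rightarrow> real) \<Rightarrow> 'a set \<Rightarrow> nat \<Rightarrow> (nat \<Rightarrow> 'a \<Rightarrow> real) \<Rightarrow> (nat \<Rightarrow> 'a \<Rightarrow> 'a)
   \<Rightarrow> ('a \<Rightarrow> real) \<Rightarrow> ('a \<Rightarrow> real) \<Rightarrow> ('a \<Rightarrow> 'a) \<Rightarrow> real \<Rightarrow> 'a
   \<Rightarrow> (nat \<Rightarrow> real) \<Rightarrow> (nat \<Rightarrow> real) \<Rightarrow> (nat \<Rightarrow> real)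
   \<Rightarrow> (nat \<Rightarrow> 'a) \<Rightarrow> (nat \<Rightarrow> 'a) \<Rightarrow> (nat \<Rightarrow> 'a) \<Rightarrow> nat \<Rightarrow> bool" where
  "mt_run N Q M F G h d Dd L0 x0 Lacc \<alpha> A y u x K \<longleftrightarrow>
     x 0 = x0 \<and> y 0 = x0 \<and> u 0 = x0 \<and> \<alpha> 0 = 0 \<and> A 0 = 0 \<and> Lacc 0 = L0 \<and>
     (\<forall>k<K. \<exists>m::nat.
        Lacc (Suc k) = Lacc k / 2 * 2 ^ m \<and>
        mt_step Q M F G h d Dd (Lacc (Suc k)) (A k) (x k) (u k)
                (\<alpha> (Suc k)) (A (Suc k)) (y (Suc k)) (u (Suc k)) (x (Suc k)) \<and>
        mt_accept N M F G h (Lacc (Suc k)) (y (Suc k)) (x (Suc k)) \<and>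
        (\<forall>m'<m. \<forall>a A' y' u' x'.
           mt_step Q M F G h d Dd (Lacc k / 2 * 2 ^ m') (A k) (x k) (u k) a A' y' u' x'
           \<longrightarrow> \<not> mt_accept N M F G h (Lacc k / 2 * 2 ^ m') y' x'))"

end

theory Submission imports Defs begin

text \<open>Write \<open>x', y', u', \<alpha>, A'\<close> for the values accepted at step \<open>k+1\<close>. The acceptance
  test bounds \<open>f(x')\<close> by the linearisation of the \<open>f\<^sub>j\<close> at \<open>y'\<close> plus a quadratic term.
  Since \<open>x' - y' = (\<alpha>/A')(u' - u\<^sub>k)\<close> and \<open>L \<alpha>\<^sup>2 = A'\<close>, that term is
  \<open>\<parallel>u' - u\<^sub>k\<parallel>\<^sup>2/(2A')\<close>, which strong convexity of \<open>d\<close> bounds by \<open>V(u',u\<^sub>k)/A'\<close>.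
  Convexity of the linearised model and of \<open>h\<close> splits the rest into \<open>\<alpha>\<close> times the prox
  objective at \<open>u'\<close> plus \<open>A\<^sub>k f(x\<^sub>k)\<close>. The three-point property of the prox step
  compares the prox objective at \<open>u'\<close> with the model at any \<open>x \<in> Q\<close>, and the model lies
  below \<open>f\<close> by the gradient inequality for the convex \<open>f\<^sub>j\<close>.\<close>

lemma has_derivative_within_segment_quotient:
  fixes g :: "'a::euclidean_space \<Rightarrow> real"
  assumes Q: "convex Q" and p: "p \<in> Q" and q: "q \<in> Q"
    and dg: "(g has_derivative (\<lambda>v. D \<bullet> v)) (at p within Q)"
  shows "((\<lambda>t. (g (p + t *\<^sub>R (q - p)) - g p) / t) \<longlongrightarrow> D \<bullet> (q - p)) (at_right 0)"
proof -
  define \<gamma> where "\<gamma> = (\<lambda>t::real. p + t *\<^sub>R (q - p))"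
  have "\<gamma> ` {0..1} \<subseteq> Q"
  proof
    fix w assume "w \<in> \<gamma> ` {0..1}"
    then obtain t where t: "0 \<le> t" "t \<le> 1" and w: "w = (1 - t) *\<^sub>R p + t *\<^sub>R q"
      by (auto simp: \<gamma>_def algebra_simps)
    show "w \<in> Q" unfolding w using convexD[OF Q p q, of "1 - t" t] t by simp
  qed
  with dg have dg': "(g has_derivative (\<lambda>v. D \<bullet> v)) (at (\<gamma> 0) within \<gamma> ` {0..1})"
    by (simp add: \<gamma>_def has_derivative_subset)
  have "(\<gamma> has_derivative (\<lambda>t. t *\<^sub>R (q - p))) (at 0 within {0..1})"
    unfolding \<gamma>_def by (auto intro!: derivative_eq_intros)
  from diff_chain_within[OF this dg']
  have "(g \<circ> \<gamma> has_derivative (\<lambda>t. D \<bullet> (t *\<^sub>R (q - p)))) (at 0 within {0..1})"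
    by (simp add: o_def)
  moreover have "(\<lambda>t. D \<bullet> (t *\<^sub>R (q - p))) = (*) (D \<bullet> (q - p))"
    by (auto simp: fun_eq_iff)
  ultimately have "(g \<circ> \<gamma> has_field_derivative (D \<bullet> (q - p))) (at 0 within {0..1})"
    by (simp add: has_field_derivative_def)
  then have "((\<lambda>t. ((g \<circ> \<gamma>) t - (g \<circ> \<gamma>) 0) / (t - 0)) \<longlongrightarrow> D \<bullet> (q - p)) (at_right 0)"
    unfolding has_field_derivative_iff using at_within_Icc_at_right[of "0::real" 1] by simp
  then show ?thesis by (simp add: \<gamma>_def)
qed

lemma eventually_at_right_0_le_1: "eventually (\<lambda>t::real. 0 < t \<and> t \<le> 1) (at_right 0)"
  using eventually_at_right_real[of 0 1] by (auto elim: eventually_mono)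

lemma convex_on_has_derivative_within_ge:
  fixes g :: "'a::euclidean_space \<Rightarrow> real"
  assumes Q: "convex Q" and p: "p \<in> Q" and q: "q \<in> Q" and cv: "convex_on Q g"
    and dg: "(g has_derivative (\<lambda>v. D \<bullet> v)) (at p within Q)"
  shows "g p + D \<bullet> (q - p) \<le> g q"
proof -
  have "D \<bullet> (q - p) \<le> g q - g p"
  proof (rule tendsto_le[OF _ tendsto_const has_derivative_within_segment_quotient[OF Q p q dg]])
    show "\<forall>\<^sub>F t in at_right 0. (g (p + t *\<^sub>R (q - p)) - g p) / t \<le> g q - g p"
      using eventually_at_right_0_le_1
    proof (rule eventually_mono)
      fix t :: real assume t: "0 < t \<and> t \<le> 1"
      have "g ((1 - t) *\<^sub>R p + t *\<^sub>R q) \<le> (1 - t) * g p + t * g q"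
        using convex_onD[OF cv, of t p q] t p q by auto
      then have "g (p + t *\<^sub>R (q - p)) - g p \<le> t * (g q - g p)"
        by (simp add: algebra_simps)
      then show "(g (p + t *\<^sub>R (q - p)) - g p) / t \<le> g q - g p"
        using t by (simp add: divide_simps mult.commute)
    qed
  qed simp
  then show ?thesis by simp
qed

lemma is_norm_minus_commute:
  assumes "is_norm N"
  shows "N (p - q) = N (q - p)"
proof -
  have "N (p - q) = N ((-1) *\<^sub>R (q - p))" by simp
  also have "\<dots> = N (q - p)" using assms unfolding is_norm_def by (metis abs_minus_cancel abs_one mult_1)
  finally show ?thesis .
qed

lemma strongly_convex_Vb_ge:
  fixes d :: "'a::euclidean_space \<Rightarrow> real"
  assumes Q: "convex Q" and p: "p \<in> Q" and q: "q \<in> Q" and N: "is_norm N"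
    and sc: "strongly_convex_wrt N 1 Q d"
    and dd: "(d has_derivative (\<lambda>v. Dd p \<bullet> v)) (at p within Q)"
  shows "1/2 * (N (q - p))\<^sup>2 \<le> Vb d Dd q p"
proof -
  let ?bound = "\<lambda>t. d q - d p - 1/2 * (1 - t) * (N (q - p))\<^sup>2"
  have bound_lim: "((\<lambda>t. ?bound t) \<longlongrightarrow> ?bound 0) (at_right 0)"
    by (intro tendsto_intros)
  have "Dd p \<bullet> (q - p) \<le> ?bound 0"
  proof (rule tendsto_le[OF _ bound_lim has_derivative_within_segment_quotient[OF Q p q dd]])
    show "\<forall>\<^sub>F t in at_right 0. (d (p + t *\<^sub>R (q - p)) - d p) / t \<le> ?bound t"
      using eventually_at_right_0_le_1
    proof (rule eventually_mono)
      fix t :: real assume t: "0 < t \<and> t \<le> 1"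
      have "d ((1 - t) *\<^sub>R p + t *\<^sub>R q) \<le> (1 - t) * d p + t * d q - 1 / 2 * t * (1 - t) * (N (p - q))\<^sup>2"
        using sc p q t unfolding strongly_convex_wrt_def by auto
      then have "d (p + t *\<^sub>R (q - p)) - d p \<le> t * ?bound t"
        using is_norm_minus_commute[OF N, of p q] by (simp add: algebra_simps)
      then show "(d (p + t *\<^sub>R (q - p)) - d p) / t \<le> ?bound t"
        using t by (simp add: divide_simps mult.commute)
    qed
  qed simp
  then show ?thesis by (simp add: Vb_def)
qed

lemma Vb_prox_three_point:
  fixes d :: "'a::euclidean_space \<Rightarrow> real"
  assumes Q: "convex Q" and u: "u \<in> Q" and z: "z \<in> Q"
    and dd: "(d has_derivative (\<lambda>v. Dd u \<bullet> v)) (at u within Q)"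
    and \<phi>: "convex_on Q \<phi>"
    and opt: "\<forall>w\<in>Q. Vb d Dd u c + \<phi> u \<le> Vb d Dd w c + \<phi> w"
  shows "Vb d Dd u c + \<phi> u + Vb d Dd z u \<le> Vb d Dd z c + \<phi> z"
proof -
  have "Dd c \<bullet> (z - u) - (\<phi> z - \<phi> u) \<le> Dd u \<bullet> (z - u)"
  proof (rule tendsto_lowerbound[OF has_derivative_within_segment_quotient[OF Q u z dd]])
    show "\<forall>\<^sub>F t in at_right 0. Dd c \<bullet> (z - u) - (\<phi> z - \<phi> u) \<le> (d (u + t *\<^sub>R (z - u)) - d u) / t"
      using eventually_at_right_0_le_1
    proof (rule eventually_mono)
      fix t :: real assume t: "0 < t \<and> t \<le> 1"
      define w where "w = (1 - t) *\<^sub>R u + t *\<^sub>R z"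
      have w_eq: "w = u + t *\<^sub>R (z - u)" by (simp add: w_def algebra_simps)
      have "w \<in> Q" unfolding w_def using convexD[OF Q u z, of "1 - t" t] t by auto
      with opt have "Vb d Dd u c + \<phi> u \<le> Vb d Dd w c + \<phi> w" by blast
      moreover have "\<phi> w \<le> (1 - t) * \<phi> u + t * \<phi> z"
        unfolding w_def using convex_onD[OF \<phi>, of t u z] t u z by simp
      moreover have "Vb d Dd w c - Vb d Dd u c = d w - d u - t * (Dd c \<bullet> (z - u))"
        by (simp add: Vb_def w_eq inner_diff_right inner_add_right algebra_simps)
      ultimately have "t * (Dd c \<bullet> (z - u) - (\<phi> z - \<phi> u)) \<le> d w - d u"
        by (simp add: algebra_simps)
      then show "Dd c \<bullet> (z - u) - (\<phi> z - \<phi> u) \<le> (d (u + t *\<^sub>R (z - u)) - d u) / t"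
        using t by (simp add: w_eq divide_simps mult.commute)
    qed
  qed simp
  moreover have "Vb d Dd z c - Vb d Dd z u - Vb d Dd u c = Dd u \<bullet> (z - u) - Dd c \<bullet> (z - u)"
    by (simp add: Vb_def inner_diff_right algebra_simps)
  ultimately show ?thesis by linarith
qed

lemma convex_on_lin_max:
  assumes M: "0 < M" and S: "convex S"
  shows "convex_on S (lin_max M F G y)"
proof (rule convex_on_subset[of UNIV], rule convex_onI)
  fix t :: real and p q :: 'a
  assume t: "0 < t" "t < 1"
  let ?lin = "\<lambda>w j. F j y + G j y \<bullet> (w - y)"
  show "lin_max M F G y ((1 - t) *\<^sub>R p + t *\<^sub>R q)
        \<le> (1 - t) * lin_max M F G y p + t * lin_max M F G y q"
    unfolding lin_max_def
  proof (rule Max.boundedI)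
    fix v assume "v \<in> ?lin ((1 - t) *\<^sub>R p + t *\<^sub>R q) ` {..<M}"
    then obtain j where j: "j < M" and v: "v = ?lin ((1 - t) *\<^sub>R p + t *\<^sub>R q) j" by auto
    have "v = (1 - t) * ?lin p j + t * ?lin q j"
      unfolding v by (simp add: inner_diff_right inner_add_right algebra_simps)
    moreover have "?lin p j \<le> Max (?lin p ` {..<M})" "?lin q j \<le> Max (?lin q ` {..<M})"
      using j by (auto intro: Max_ge)
    ultimately show "v \<le> (1 - t) * Max (?lin p ` {..<M}) + t * Max (?lin q ` {..<M})"
      using t by (simp add: add_mono mult_left_mono)
  qed (use M in auto)
qed (use S in auto)

lemma lin_max_le_Max:
  assumes M: "0 < M" and Q: "convex Q" and y: "y \<in> Q" and w: "w \<in> Q"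
    and F_convex: "\<forall>j<M. convex_on Q (F j)"
    and F_diff: "\<forall>j<M. (F j has_derivative (\<lambda>v. G j y \<bullet> v)) (at y within Q)"
  shows "lin_max M F G y w \<le> Max ((\<lambda>j. F j w) ` {..<M})"
  unfolding lin_max_def
proof (rule Max.boundedI)
  fix v assume "v \<in> (\<lambda>j. F j y + G j y \<bullet> (w - y)) ` {..<M}"
  then obtain j where j: "j < M" and v: "v = F j y + G j y \<bullet> (w - y)" by auto
  have "v \<le> F j w"
    unfolding v using j F_convex F_diff by (intro convex_on_has_derivative_within_ge[OF Q y w]) auto
  also have "F j w \<le> Max ((\<lambda>j. F j w) ` {..<M})" using j by (intro Max_ge) auto
  finally show "v \<le> Max ((\<lambda>j. F j w) ` {..<M})" .
qed (use M in auto)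

lemma largest_root_pos:
  fixes L A a :: real
  assumes L: "0 < L" and A: "0 \<le> A" and largest: "\<forall>b. L * b\<^sup>2 = A + b \<longrightarrow> b \<le> a"
  shows "0 < a"
proof -
  define s where "s = sqrt (1 + 4 * L * A)"
  have s2: "s\<^sup>2 = 1 + 4 * L * A" and s0: "0 \<le> s" unfolding s_def using L A by simp_all
  define b where "b = (1 + s) / (2 * L)"
  have "L * b\<^sup>2 = A + b"
    unfolding b_def using L s2 by (simp add: power2_eq_square field_simps)
  with largest have "b \<le> a" by blast
  moreover have "0 < b" unfolding b_def using L s0 by simp
  ultimately show ?thesis by simp
qed

lemma mt_step_convex_combinations:
  assumes Q: "convex Q" and Lt: "0 < Lt" and Ak: "0 \<le> Ak" and xk: "xk \<in> Q" and uk: "uk \<in> Q"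
    and step: "mt_step Q M F G h d Dd Lt Ak xk uk a A' y u x"
  shows "0 < a" "0 < A'" "u \<in> Q"
    and "x = (a / A') *\<^sub>R u + (Ak / A') *\<^sub>R xk" "y = (a / A') *\<^sub>R uk + (Ak / A') *\<^sub>R xk"
    and "x \<in> Q" "y \<in> Q"
proof -
  from step have largest: "\<forall>b. Lt * b\<^sup>2 = Ak + b \<longrightarrow> b \<le> a" and A': "A' = Ak + a"
    and y: "y = (1 / A') *\<^sub>R (a *\<^sub>R uk + Ak *\<^sub>R xk)" and u: "u \<in> Q"
    and x: "x = (1 / A') *\<^sub>R (a *\<^sub>R u + Ak *\<^sub>R xk)"
    unfolding mt_step_def by auto
  show a: "0 < a" using largest_root_pos[OF Lt Ak largest] .
  then show A'_pos: "0 < A'" using A' Ak by simp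
  have weights: "a / A' + Ak / A' = 1" "0 \<le> a / A'" "0 \<le> Ak / A'"
    using A' A'_pos a Ak by (simp_all add: add_divide_distrib[symmetric])
  show "u \<in> Q" by (rule u)
  show x': "x = (a / A') *\<^sub>R u + (Ak / A') *\<^sub>R xk" and y': "y = (a / A') *\<^sub>R uk + (Ak / A') *\<^sub>R xk"
    using x y by (simp_all add: scaleR_add_right)
  show "x \<in> Q" unfolding x' using convexD[OF Q u xk weights(2,3,1)] .
  show "y \<in> Q" unfolding y' using convexD[OF Q uk xk weights(2,3,1)] .
qed

lemma mt_run_invariants:
  assumes Q: "convex Q" and x0: "x0 \<in> Q" and L0: "0 < L0"
    and run: "mt_run N Q M F G h d Dd L0 x0 Lacc \<alpha> A y u x K"
    and n: "n \<le> K"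
  shows "0 < Lacc n \<and> 0 \<le> A n \<and> x n \<in> Q \<and> u n \<in> Q"
  using n
proof (induction n)
  case 0
  then show ?case using run x0 L0 by (simp add: mt_run_def)
next
  case (Suc k)
  then have IH: "0 < Lacc k" "0 \<le> A k" "x k \<in> Q" "u k \<in> Q" by auto
  from Suc.prems have "k < K" by simp
  with run obtain m where L: "Lacc (Suc k) = Lacc k / 2 * 2 ^ m"
    and step: "mt_step Q M F G h d Dd (Lacc (Suc k)) (A k) (x k) (u k)
                 (\<alpha> (Suc k)) (A (Suc k)) (y (Suc k)) (u (Suc k)) (x (Suc k))"
    unfolding mt_run_def by blast
  have "0 < Lacc (Suc k)" unfolding L using IH by simp
  with mt_step_convex_combinations[OF Q this IH(2-4) step] show ?case by simp
qed

lemma mt_step_descent: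
  assumes N: "is_norm N" and Q: "convex Q" and M: "0 < M"
    and F_convex: "\<forall>j<M. convex_on Q (F j)"
    and F_diff: "\<forall>j<M. \<forall>p\<in>Q. (F j has_derivative (\<lambda>v. G j p \<bullet> v)) (at p within Q)"
    and h_convex: "convex_on Q h"
    and d_diff: "\<forall>p\<in>Q. (d has_derivative (\<lambda>v. Dd p \<bullet> v)) (at p within Q)"
    and d_sc: "strongly_convex_wrt N 1 Q d"
    and Lt: "0 < Lt" and Ak: "0 \<le> Ak" and xk: "xk \<in> Q" and uk: "uk \<in> Q"
    and step: "mt_step Q M F G h d Dd Lt Ak xk uk a A' y u x"
    and accept: "mt_accept N M F G h Lt y x"
  shows "A' * fobj M F h x - Ak * fobj M F h xk \<le> a * (lin_max M F G y u + h u) + Vb d Dd u uk"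
proof -
  note geom = mt_step_convex_combinations[OF Q Lt Ak xk uk step]
  define c where "c = a / A'"
  define lm where "lm = lin_max M F G y"
  define fmax where "fmax = (\<lambda>w. Max ((\<lambda>j. F j w) ` {..<M}))"
  have fobj: "\<And>w. fobj M F h w = fmax w + h w" by (simp add: fobj_def fmax_def)
  have A': "A' = Ak + a" and root: "Lt * a\<^sup>2 = A'" using step unfolding mt_step_def by auto
  have c_compl: "1 - c = Ak / A'" using A' geom(2) by (simp add: c_def field_simps)
  have scale: "A' * (1 - c) = Ak" "A' * c = a" using A' geom(2) by (simp_all add: c_def field_simps)
  have c0: "0 \<le> c" "c \<le> 1" using geom(1,2) Ak A' by (simp_all add: c_def divide_le_eq_1)
  have x: "x = (1 - c) *\<^sub>R xk + c *\<^sub>R u" and y: "y = (1 - c) *\<^sub>R xk + c *\<^sub>R uk"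
    using geom(4,5) by (simp_all add: c_def[symmetric] c_compl[symmetric] add.commute)
  have "x - y = c *\<^sub>R (u - uk)" unfolding x y by (simp add: algebra_simps)
  then have "N (x - y) = c * N (u - uk)" using N c0 unfolding is_norm_def by simp
  then have "Lt / 2 * (N (x - y))\<^sup>2 = (Lt * a\<^sup>2) / (2 * A'\<^sup>2) * (N (u - uk))\<^sup>2"
    by (simp add: c_def power_mult_distrib power_divide)
  also have "\<dots> = 1 / (2 * A') * (N (u - uk))\<^sup>2"
    using root geom(2) by (simp add: power2_eq_square)
  finally have quad: "Lt / 2 * (N (x - y))\<^sup>2 = 1 / (2 * A') * (N (u - uk))\<^sup>2" .
  have lm_x: "lm x \<le> (1 - c) * lm xk + c * lm u"
    unfolding x lm_def using convex_onD[OF convex_on_lin_max[OF M convex_UNIV]] c0 by blast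
  have h_x: "h x \<le> (1 - c) * h xk + c * h u"
    unfolding x using convex_onD[OF h_convex] c0 xk geom(3) by blast
  have lm_xk: "lm xk \<le> fmax xk"
    unfolding lm_def fmax_def using F_convex F_diff geom(7)
    by (intro lin_max_le_Max[OF M Q geom(7) xk]) auto
  have "fobj M F h x \<le> lm x + Lt / 2 * (N (x - y))\<^sup>2 + h x"
    using accept unfolding mt_accept_def lm_def .
  also have "\<dots> \<le> (1 - c) * fobj M F h xk + c * (lm u + h u) + 1 / (2 * A') * (N (u - uk))\<^sup>2"
    using lm_x h_x mult_left_mono[OF lm_xk, of "1 - c"] c0 quad by (simp add: fobj algebra_simps)
  finally have "A' * fobj M F h x
      \<le> A' * ((1 - c) * fobj M F h xk + c * (lm u + h u) + 1 / (2 * A') * (N (u - uk))\<^sup>2)"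
    using geom(2) by simp
  also have "\<dots> = Ak * fobj M F h xk + a * (lm u + h u) + 1/2 * (N (u - uk))\<^sup>2"
    using geom(2) by (simp add: distrib_left mult.assoc[symmetric] scale)
  also have "\<dots> \<le> Ak * fobj M F h xk + a * (lm u + h u) + Vb d Dd u uk"
    using strongly_convex_Vb_ge[OF Q uk geom(3) N d_sc] d_diff uk by simp
  finally show ?thesis by (simp add: lm_def)
qed

lemma mt_step_estimate:
  assumes N: "is_norm N" and Q: "convex Q" and M: "0 < M"
    and F_convex: "\<forall>j<M. convex_on Q (F j)"
    and F_diff: "\<forall>j<M. \<forall>p\<in>Q. (F j has_derivative (\<lambda>v. G j p \<bullet> v)) (at p within Q)"
    and h_convex: "convex_on Q h"
    and d_diff: "\<forall>p\<in>Q. (d has_derivative (\<lambda>v. Dd p \<bullet> v)) (at p within Q)"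
    and d_sc: "strongly_convex_wrt N 1 Q d"
    and Lt: "0 < Lt" and Ak: "0 \<le> Ak" and xk: "xk \<in> Q" and uk: "uk \<in> Q" and z: "z \<in> Q"
    and step: "mt_step Q M F G h d Dd Lt Ak xk uk a A' y u x"
    and accept: "mt_accept N M F G h Lt y x"
  shows "A' * fobj M F h x - Ak * fobj M F h xk + Vb d Dd z u - Vb d Dd z uk \<le> a * fobj M F h z"
proof -
  note geom = mt_step_convex_combinations[OF Q Lt Ak xk uk step]
  define \<phi> where "\<phi> = (\<lambda>w. a * (lin_max M F G y w + h w))"
  have "convex_on Q \<phi>"
    unfolding \<phi>_def using geom(1) convex_on_lin_max[OF M Q] h_convex by (intro convex_on_cmul) auto
  moreover have "\<forall>w\<in>Q. Vb d Dd u uk + \<phi> u \<le> Vb d Dd w uk + \<phi> w"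
    using step unfolding mt_step_def \<phi>_def by blast
  ultimately have three_point: "Vb d Dd u uk + \<phi> u + Vb d Dd z u \<le> Vb d Dd z uk + \<phi> z"
    using Vb_prox_three_point[OF Q geom(3) z] d_diff geom(3) by blast
  have "lin_max M F G y z \<le> Max ((\<lambda>j. F j z) ` {..<M})"
    using F_convex F_diff geom(7) by (intro lin_max_le_Max[OF M Q geom(7) z]) auto
  then have "\<phi> z \<le> a * fobj M F h z"
    unfolding \<phi>_def fobj_def using geom(1) by simp
  with three_point mt_step_descent[OF N Q M F_convex F_diff h_convex d_diff d_sc Lt Ak xk uk step accept]
  show ?thesis by (simp add: \<phi>_def)
qed

theorem lemma3:
  fixes N :: "'a::euclidean_space \<Rightarrow> real"
    and Q :: "'a set" and M :: nat
    and F :: "nat \<Rightarrow> 'a \<Rightarrow> real" and G :: "nat \<Rightarrow> 'a \<Rightarrow> 'a"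
    and h d :: "'a \<Rightarrow> real" and Dd :: "'a \<Rightarrow> 'a"
    and L L0 :: real and x0 :: 'a
    and Lacc \<alpha> A :: "nat \<Rightarrow> real" and y u x :: "nat \<Rightarrow> 'a"
    and K k :: nat and z :: 'a
  assumes norm: "is_norm N"
    and Q: "closed Q" "convex Q"
    and M: "0 < M"
    and F_convex: "\<forall>j<M. convex_on Q (F j)"
    and F_diff: "\<forall>j<M. \<forall>p\<in>Q. (F j has_derivative (\<lambda>v. G j p \<bullet> v)) (at p)"
    and F_Lip: "\<forall>j<M. \<forall>p\<in>Q. \<forall>q\<in>Q. dual_norm N (G j p - G j q) \<le> L * N (p - q)"
    and h_convex: "convex_on Q h"
    and d_diff: "\<forall>p\<in>Q. (d has_derivative (\<lambda>v. Dd p \<bullet> v)) (at p within Q)"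
    and d_cont: "continuous_on Q Dd"
    and d_sc: "strongly_convex_wrt N 1 Q d"
    and x0: "x0 \<in> Q"
    and L0: "0 < L0" "L0 \<le> L"
    and run: "mt_run N Q M F G h d Dd L0 x0 Lacc \<alpha> A y u x K"
    and k: "k < K"
    and z: "z \<in> Q"
  shows "A (Suc k) * fobj M F h (x (Suc k)) - A k * fobj M F h (x k)
           + Vb d Dd z (u (Suc k)) - Vb d Dd z (u k)
         \<le> \<alpha> (Suc k) * fobj M F h z"
proof -
  have F_diff_within: "\<forall>j<M. \<forall>p\<in>Q. (F j has_derivative (\<lambda>v. G j p \<bullet> v)) (at p within Q)"
    using F_diff by (auto intro: has_derivative_at_withinI)
  have inv_k: "0 < Lacc k" "0 \<le> A k" "x k \<in> Q" "u k \<in> Q"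
    using mt_run_invariants[OF Q(2) x0 L0(1) run, of k] k by auto
  from run k obtain m where L: "Lacc (Suc k) = Lacc k / 2 * 2 ^ m"
    and step: "mt_step Q M F G h d Dd (Lacc (Suc k)) (A k) (x k) (u k)
                 (\<alpha> (Suc k)) (A (Suc k)) (y (Suc k)) (u (Suc k)) (x (Suc k))"
    and accept: "mt_accept N M F G h (Lacc (Suc k)) (y (Suc k)) (x (Suc k))"
    unfolding mt_run_def by blast
  have "0 < Lacc (Suc k)" unfolding L using inv_k by simp
  from mt_step_estimate[OF norm Q(2) M F_convex F_diff_within h_convex d_diff d_sc
      this inv_k(2-4) z step accept]
  show ?thesis by simp
qed

end
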